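(* Let $n\ge 1$, $U_n$ the family of bounded subsets of $\mathbb R^n$, $H\subset\mathbb R^n$ locally finite, and $\mu_H:U_n\to B_2$, $\mu_H(A)=\pi(|A\cap H|)$. Then for every $A\in U_n$ and every $x\in A$ there exist $\varepsilon>0$ and $a\in B_2$ such that for every $B\in U_n$ with $x\in B$ and $d(B)<\varepsilon$ one has $\mu_H(B)=a$.
   Context: $B_2=\{0,1\}$. $H$ is locally finite if $A\cap H$ is finite for every bounded $A$. $\pi(m)=1$ if $m$ is odd and $0$ if $m$ is even. For a bounded $B\subset\mathbb R^n$, its diameter is $d(B)=\sup_{x,y\in B}\|x-y\|$ with $\|\cdot\|$ the Euclidean norm. *)

theory Defs
  imports "HOL-Analysis.Analysis"
begin

definition locally_finite_set :: "'a::metric_space set \<Rightarrow> bool" where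
  "locally_finite_set H \<longleftrightarrow> (\<forall>A. bounded A \<longrightarrow> finite (A \<inter> H))"

text \<open>pi(m) = 1 if m odd, 0 if m even; values in B_2 = {0,1}.\<close>
definition parity_pi :: "nat \<Rightarrow> nat" where
  "parity_pi m = (if odd m then 1 else 0)"

text \<open>mu_H(A) = pi(|A \<inter> H|), meant for bounded A (then A \<inter> H is finite).\<close>
definition mu_H :: "'a set \<Rightarrow> 'a set \<Rightarrow> nat" where
  "mu_H H A = parity_pi (card (A \<inter> H))"

end

theory Submission
  imports Defs
begin

text \<open>By local finiteness, the points of \<open>H\<close> other than \<open>x\<close> keep a positive distance
  from \<open>x\<close>. A bounded set of smaller diameter containing \<open>x\<close> therefore meets \<open>H\<close> in
  \<open>{x} \<inter> H\<close>, so its parity is \<open>\<mu>\<^sub>H({x})\<close>.\<close>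

lemma locally_finite_set_isolated:
  fixes x :: "'a::metric_space"
  assumes "locally_finite_set H"
  obtains e where "e > 0" "\<And>y. y \<in> H \<Longrightarrow> dist x y < e \<Longrightarrow> y = x"
proof -
  have "finite (ball x 1 \<inter> H)"
    using assms by (simp add: locally_finite_set_def)
  then obtain d where "d > 0" and d: "\<forall>y\<in>ball x 1 \<inter> H. y \<noteq> x \<longrightarrow> d \<le> dist x y"
    using finite_set_avoid by blast
  show thesis
  proof
    show "min d 1 > 0" using \<open>d > 0\<close> by simp
    show "y = x" if "y \<in> H" "dist x y < min d 1" for y
      using d that by fastforce
  qed
qed

lemma inter_eq_singleton_if_diameter_less:
  assumes isolated: "\<And>y. y \<in> H \<Longrightarrow> dist x y < e \<Longrightarrow> y = x"
    and "bounded B" "x \<in> B" "diameter B < e"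
  shows "B \<inter> H = {x} \<inter> H"
proof -
  have "dist x y < e" if "y \<in> B" for y
    using diameter_bounded_bound[OF \<open>bounded B\<close> \<open>x \<in> B\<close> that] \<open>diameter B < e\<close> by linarith
  then show ?thesis
    using isolated \<open>x \<in> B\<close> by blast
qed

lemma mu_H_in_B2: "mu_H H A \<in> {0, 1}"
  by (simp add: mu_H_def parity_pi_def)

theorem proposition5p7:
  fixes H :: "(real ^ 'n) set"
  assumes "locally_finite_set H"
  shows "\<forall>A. bounded A \<longrightarrow> (\<forall>x\<in>A. \<exists>\<epsilon>>0. \<exists>a\<in>{0::nat, 1}.
           \<forall>B. bounded B \<and> x \<in> B \<and> diameter B < \<epsilon> \<longrightarrow> mu_H H B = a)"
proof (intro allI impI ballI)
  fix A x
  obtain e where "e > 0" and isolated: "\<And>y. y \<in> H \<Longrightarrow> dist x y < e \<Longrightarrow> y = x"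
    using locally_finite_set_isolated[OF assms] by blast
  have "mu_H H B = mu_H H {x}" if "bounded B" "x \<in> B" "diameter B < e" for B
    using inter_eq_singleton_if_diameter_less[OF isolated that] by (simp add: mu_H_def)
  then show "\<exists>\<epsilon>>0. \<exists>a\<in>{0::nat, 1}.
      \<forall>B. bounded B \<and> x \<in> B \<and> diameter B < \<epsilon> \<longrightarrow> mu_H H B = a"
    using \<open>e > 0\<close> mu_H_in_B2 by blast
qed

end
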